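(* Let $\mathcal{P}\subset K[x_1,\ldots,x_n]$ be a chordal polynomial set with $x_1<\cdots<x_n$ as a perfect elimination ordering. Let $\overline{\mathrm{red}}_n(\mathcal{P}),\ldots,\overline{\mathrm{red}}_1(\mathcal{P})$ be any successive reduction of $\mathcal{P}$, with arbitrary valid reduction data at each step. Then $G(\overline{\mathrm{red}}_i(\mathcal{P}))\subseteq G(\mathcal{P})$ for every $i=n,\ldots,1$.
   Context: Let $K$ be a field and $K[x_1,\ldots,x_n]$ the polynomial ring, with the variables ordered $x_1<\cdots<x_n$. For a polynomial $F$, $\mathrm{supp}(F)$ is the set of variables effectively appearing in $F$. For a set of polynomials $\mathcal{P}$, $\mathrm{supp}(\mathcal{P})=\bigcup_{F\in\mathcal{P}}\mathrm{supp}(F)$. For a nonconstant $F$, $\mathrm{lv}(F)$ is the greatest variable in $\mathrm{supp}(F)$. For a polynomial set $\mathcal{P}$ and $1\le i\le n$, $\mathcal{P}^{(i)}=\{P\in\mathcal{P}:\mathrm{lv}(P)=x_i\}$; constants belong to no $\mathcal{P}^{(i)}$. The associated graph $G(\mathcal{P})$ is the undirected graph whose vertex set is $\mathrm{supp}(\mathcal{P})$, with an edge between distinct $x_i,x_j$ iff some $F\in\mathcal{P}$ has $x_i,x_j\in\mathrm{supp}(F)$. For graphs, $G\subseteq G'$ means that $G$ is a subgraph of $G'$, i.e. both the vertex set and the edge set are contained. An ordering of the vertices of a graph is a perfect elimination ordering if, for every vertex $v$, the set consisting of $v$ and all neighbours of $v$ smaller than $v$ is a clique. A polynomial set $\mathcal{P}$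 is called chordal with $x_1<\cdots<x_n$ as a perfect elimination ordering if the restriction of this ordering to $\mathrm{supp}(\mathcal{P})$ is a perfect elimination ordering of $G(\mathcal{P})$. Reduction step: let $\mathcal{S}$ be a polynomial set and $1\le i\le n$ with $\mathcal{S}^{(i)}\neq\emptyset$. Reduction data for $(\mathcal{S},i)$ is a pair $(T_i,\mathcal{R}_i)$ such that: - $T_i\in K[x_1,\ldots,x_i]\setminus K[x_1,\ldots,x_{i-1}]$ and $\mathcal{R}_i\subset K[x_1,\ldots,x_{i-1}]$, where $K[x_1,\ldots,x_0]=K$; - $\mathrm{supp}(T_i)\subseteq\mathrm{supp}(\mathcal{S}^{(i)})$ and $\mathrm{supp}(\mathcal{R}_i)\subseteq\mathrm{supp}(\mathcal{S}^{(i)})$. Given such a pair, $$\mathrm{red}_i(\mathcal{S})=\bigcup_{j>i}\mathcal{S}^{(j)}\ \cup\ \{T_i\}\ \cup\ \bigcup_{j<i}\big(\mathcal{S}^{(j)}\cup\mathcal{R}_i^{(j)}\big).$$ If $\mathcal{S}^{(i)}=\emptyset$, set $\mathrm{red}_i(\mathcal{S})=\bigcup_{j}\mathcal{S}^{(j)}$. Successive reduction: $\overline{\mathrm{red}}_{n+1}(\mathcal{P})=\mathcal{P}$ and $\overline{\mathrm{red}}_i(\mathcal{P})=\mathrm{red}_i(\overline{\mathrm{red}}_{i+1}(\mathcal{P}))$ for $i=n,\ldots,1$. At each step some reduction data for $(\overline{\mathrm{red}}_{i+1}(\mathcal{P}),i)$ is chosen. *)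

theory Defs
  imports "HOL-Library.Poly_Mapping"
begin

text \<open>Multivariate polynomials over a field K in variables x_1, x_2, ...:
  a polynomial is a finitely supported map from monomials (exponent vectors
  nat =>0 nat, variable x_i has index i) to coefficients.
  K[x_1..x_n] consists of those polynomials whose variables lie in {1..n}.\<close>

type_synonym 'a mpoly = "(nat \<Rightarrow>\<^sub>0 nat) \<Rightarrow>\<^sub>0 'a"

definition vars :: "'a::zero mpoly \<Rightarrow> nat set" where
  "vars F = (\<Union>m\<in>Poly_Mapping.keys F. Poly_Mapping.keys m)"

definition supp_set :: "'a::zero mpoly set \<Rightarrow> nat set" where
  "supp_set P = (\<Union>F\<in>P. vars F)"

text \<open>Leading variable (index of the greatest variable), for nonconstant F.\<close>
definition lv :: "'a::zero mpoly \<Rightarrow> nat" where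
  "lv F = Max (vars F)"

definition level :: "'a::zero mpoly set \<Rightarrow> nat \<Rightarrow> 'a mpoly set" where
  "level P i = {F \<in> P. vars F \<noteq> {} \<and> lv F = i}"

text \<open>Undirected graphs as (vertex set, symmetric edge relation).\<close>
definition assoc_graph :: "'a::zero mpoly set \<Rightarrow> nat set \<times> (nat \<times> nat) set" where
  "assoc_graph P = (supp_set P,
     {(a, b). a \<noteq> b \<and> (\<exists>F\<in>P. a \<in> vars F \<and> b \<in> vars F)})"

definition subgraph :: "'v set \<times> ('v \<times> 'v) set \<Rightarrow> 'v set \<times> ('v \<times> 'v) set \<Rightarrow> bool" where
  "subgraph G G' \<longleftrightarrow> fst G \<subseteq> fst G' \<and> snd G \<subseteq> snd G'"

text \<open>The natural order on the vertices is a perfect elimination ordering: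
  for every vertex v, v together with its smaller neighbours forms a clique.\<close>
definition perfect_elim_nat :: "nat set \<times> (nat \<times> nat) set \<Rightarrow> bool" where
  "perfect_elim_nat G \<longleftrightarrow>
     (\<forall>v\<in>fst G. \<forall>a\<in>insert v {u \<in> fst G. u < v \<and> (u, v) \<in> snd G}.
        \<forall>b\<in>insert v {u \<in> fst G. u < v \<and> (u, v) \<in> snd G}. a \<noteq> b \<longrightarrow> (a, b) \<in> snd G)"

definition chordal :: "'a::zero mpoly set \<Rightarrow> bool" where
  "chordal P \<longleftrightarrow> perfect_elim_nat (assoc_graph P)"

definition reduction_data :: "'a::zero mpoly set \<Rightarrow> nat \<Rightarrow> 'a mpoly \<Rightarrow> 'a mpoly set \<Rightarrow> bool" where
  "reduction_data S i T R \<longleftrightarrow>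
     vars T \<subseteq> {1..i} \<and> \<not> vars T \<subseteq> {1..<i} \<and>
     (\<forall>F\<in>R. vars F \<subseteq> {1..<i}) \<and>
     vars T \<subseteq> supp_set (level S i) \<and> supp_set R \<subseteq> supp_set (level S i)"

definition red :: "nat \<Rightarrow> 'a::zero mpoly set \<Rightarrow> nat \<Rightarrow> 'a mpoly \<Rightarrow> 'a mpoly set \<Rightarrow> 'a mpoly set" where
  "red n S i T R =
     (if level S i = {} then (\<Union>j\<in>{1..n}. level S j)
      else (\<Union>j\<in>{i<..n}. level S j) \<union> {T} \<union> (\<Union>j\<in>{1..<i}. level S j \<union> level R j))"

definition successive_reduction :: "nat \<Rightarrow> 'a::zero mpoly set \<Rightarrow> (nat \<Rightarrow> 'a mpoly set) \<Rightarrow> bool" where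
  "successive_reduction n P Q \<longleftrightarrow>
     Q (n + 1) = P \<and>
     (\<forall>i\<in>{1..n}.
        (level (Q (i + 1)) i = {} \<and> Q i = (\<Union>j\<in>{1..n}. level (Q (i + 1)) j)) \<or>
        (level (Q (i + 1)) i \<noteq> {} \<and>
         (\<exists>T R. reduction_data (Q (i + 1)) i T R \<and> Q i = red n (Q (i + 1)) i T R)))"

end

theory Submission
  imports Defs
begin

text \<open>Every polynomial of level i has x_i as its greatest variable, so as long as
  G(S) is a subgraph of G(P) its variables lie among x_i and the smaller neighbours of
  x_i in G(P), which form a clique by the perfect elimination property. The reduction
  data T_i and R_i only use these variables, hence add no vertex or edge outside G(P);
  induction downwards along the successive reduction gives the claim.\<close>

definition is_clique :: "'v set \<times> ('v \<times> 'v) set \<Rightarrow> 'v set \<Rightarrow> bool" where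
  "is_clique G C \<longleftrightarrow> C \<subseteq> fst G \<and> (\<forall>a\<in>C. \<forall>b\<in>C. a \<noteq> b \<longrightarrow> (a, b) \<in> snd G)"

definition lower_closed_nbhd :: "nat set \<times> (nat \<times> nat) set \<Rightarrow> nat \<Rightarrow> nat set" where
  "lower_closed_nbhd G v = insert v {u \<in> fst G. u < v \<and> (u, v) \<in> snd G}"

lemma is_clique_subset: "is_clique G D \<Longrightarrow> C \<subseteq> D \<Longrightarrow> is_clique G C"
  unfolding is_clique_def by blast

lemma perfect_elim_nat_is_clique_lower_closed_nbhd:
  assumes "perfect_elim_nat G" and "v \<in> fst G"
  shows "is_clique G (lower_closed_nbhd G v)"
  using assms unfolding perfect_elim_nat_def is_clique_def lower_closed_nbhd_def by blast

lemma subgraph_assoc_graph_iff: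
  "subgraph (assoc_graph S) G \<longleftrightarrow> (\<forall>F\<in>S. is_clique G (vars F))"
  unfolding subgraph_def assoc_graph_def supp_set_def is_clique_def by auto

lemma subgraph_assoc_graph_subset:
  assumes "subgraph (assoc_graph S) G"
    and "S' \<subseteq> S \<union> X"
    and "\<forall>F\<in>X. vars F \<subseteq> C"
    and "is_clique G C"
  shows "subgraph (assoc_graph S') G"
  using assms is_clique_subset unfolding subgraph_assoc_graph_iff by blast

lemma vars_level_subset_lower_closed_nbhd:
  assumes sub: "subgraph (assoc_graph S) G" and F: "F \<in> level S i"
  shows "i \<in> fst G" and "vars F \<subseteq> lower_closed_nbhd G i"
proof -
  have "F \<in> S" and ne: "vars F \<noteq> {}" and max: "Max (vars F) = i"
    using F unfolding level_def lv_def by auto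
  have clique: "is_clique G (vars F)"
    using sub \<open>F \<in> S\<close> unfolding subgraph_assoc_graph_iff by blast
  have fin: "finite (vars F)"
    unfolding vars_def by auto
  have "i \<in> vars F"
    using Max_in[OF fin ne] max by simp
  then show "i \<in> fst G"
    using clique unfolding is_clique_def by blast
  have "u < i" if "u \<in> vars F" "u \<noteq> i" for u
    using Max_ge[OF fin that(1)] max that(2) by simp
  then show "vars F \<subseteq> lower_closed_nbhd G i"
    using clique \<open>i \<in> vars F\<close> unfolding is_clique_def lower_closed_nbhd_def by blast
qed

lemma is_clique_supp_set_level:
  assumes "perfect_elim_nat G" and "subgraph (assoc_graph S) G"
  shows "is_clique G (supp_set (level S i))"
proof (cases "level S i = {}")
  case True
  then show ?thesis
    unfolding is_clique_def supp_set_def by simp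
next
  case False
  then obtain F where "F \<in> level S i"
    by blast
  then have "is_clique G (lower_closed_nbhd G i)"
    using assms vars_level_subset_lower_closed_nbhd(1)
      perfect_elim_nat_is_clique_lower_closed_nbhd by blast
  moreover have "supp_set (level S i) \<subseteq> lower_closed_nbhd G i"
    using vars_level_subset_lower_closed_nbhd(2)[OF assms(2)] unfolding supp_set_def by blast
  ultimately show ?thesis
    by (rule is_clique_subset)
qed

lemma red_subset: "red n S i T R \<subseteq> S \<union> insert T R"
  unfolding red_def level_def by auto

lemma subgraph_assoc_graph_red:
  assumes "perfect_elim_nat G"
    and "subgraph (assoc_graph S) G"
    and "reduction_data S i T R"
  shows "subgraph (assoc_graph (red n S i T R)) G"
proof (rule subgraph_assoc_graph_subset[OF assms(2) red_subset])
  show "\<forall>F\<in>insert T R. vars F \<subseteq> supp_set (level S i)"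
    using assms(3) unfolding reduction_data_def supp_set_def by blast
  show "is_clique G (supp_set (level S i))"
    using assms(1,2) by (rule is_clique_supp_set_level)
qed

lemma subgraph_assoc_graph_successive_reduction:
  assumes "perfect_elim_nat G"
    and "subgraph (assoc_graph P) G"
    and "successive_reduction n P Q"
    and "1 \<le> i" "i \<le> n + 1"
  shows "subgraph (assoc_graph (Q i)) G"
  using \<open>i \<le> n + 1\<close>
proof (induction i rule: inc_induct)
  case base
  then show ?case
    using assms(2,3) unfolding successive_reduction_def by simp
next
  case (step k)
  then have "k \<in> {1..n}"
    using \<open>1 \<le> i\<close> by simp
  then consider "Q k \<subseteq> Q (Suc k)"
    | T R where "reduction_data (Q (Suc k)) k T R" "Q k = red n (Q (Suc k)) k T R"
    using assms(3) unfolding successive_reduction_def level_def by fastforce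
  then show ?case
  proof cases
    case 1
    then show ?thesis
      using step.IH unfolding subgraph_assoc_graph_iff by blast
  next
    case 2
    then show ?thesis
      using subgraph_assoc_graph_red[OF assms(1) step.IH] by simp
  qed
qed

theorem theorem3p5:
  fixes P :: "'a::field mpoly set" and n :: nat and Q :: "nat \<Rightarrow> 'a mpoly set"
  assumes "\<forall>F\<in>P. vars F \<subseteq> {1..n}"
    and "chordal P"
    and "successive_reduction n P Q"
  shows "\<forall>i\<in>{1..n}. subgraph (assoc_graph (Q i)) (assoc_graph P)"
proof
  fix i assume "i \<in> {1..n}"
  have "subgraph (assoc_graph P) (assoc_graph P)"
    unfolding subgraph_def by simp
  with assms(2,3) \<open>i \<in> {1..n}\<close> show "subgraph (assoc_graph (Q i)) (assoc_graph P)"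
    unfolding chordal_def by (auto intro: subgraph_assoc_graph_successive_reduction)
qed

end
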